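(* Let $\theta\in\mathbb{R}$ and let $\phi:\mathbb{N}\cup\{0\}\to\mathbb{R}$ be such that $\sum_kC^k|\phi(k)|(k!)^{-2}<\infty$ for every $C>0$. Then for continuous bounded variation paths $\gamma,\sigma:[a,b]\to V$ and every $(s,t)\in[a,b]^2$, \[ K_{\theta\phi}^{\gamma,\sigma}(s,t)=K_\phi^{\theta\gamma,\sigma}(s,t)=K_\phi^{\gamma,\theta\sigma}(s,t). \] In particular, if $\phi\equiv1$, then $K_\theta^{\gamma,\sigma}:=K_{\theta\phi}^{\gamma,\sigma}$ satisfies \[ K_\theta^{\gamma,\sigma}(s,t)=1+\theta\int_a^s\int_a^tK_\theta^{\gamma,\sigma}(u,v)\,\langle d\gamma_u,d\sigma_v\rangle . \]
   Context: $V$ is a finite-dimensional real inner product space, $\langle\cdot,\cdot\rangle_k$ the induced Hilbert–Schmidt inner product on $V^{\otimes k}$. Signature: $S(\gamma)^0=1$, $S(\gamma)^k_{s,t}=\int_{s<u_1<\dots<u_k<t}d\gamma_{u_1}\otimes\cdots\otimes d\gamma_{u_k}$. $K_\phi^{\gamma,\sigma}(s,t)=\sum_{k\ge0}\phi(k)\langle S(\gamma)^k_{a,s},S(\sigma)^k_{a,t}\rangle_k$. $\theta\phi$ denotes the function $n\mapsto\theta^n\phi(n)$, and $\theta\gamma$ the path $u\mapsto\theta\gamma_u$. *)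

theory Defs
  imports "HOL-Analysis.Analysis"
begin

definition is_partition :: "real \<Rightarrow> real \<Rightarrow> nat \<Rightarrow> (nat \<Rightarrow> real) \<Rightarrow> bool" where
  "is_partition a b n x \<longleftrightarrow> x 0 = a \<and> x n = b \<and> (\<forall>i<n. x i \<le> x (Suc i))"

definition bounded_variation_on :: "real \<Rightarrow> real \<Rightarrow> (real \<Rightarrow> 'a::real_normed_vector) \<Rightarrow> bool" where
  "bounded_variation_on a b g \<longleftrightarrow>
     (\<exists>M. \<forall>n x. is_partition a b n x \<longrightarrow> (\<Sum>i<n. norm (g (x (Suc i)) - g (x i))) \<le> M)"

definition has_RS_integral :: "(real \<Rightarrow> real) \<Rightarrow> (real \<Rightarrow> real) \<Rightarrow> real \<Rightarrow> real \<Rightarrow> real \<Rightarrow> bool" where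
  "has_RS_integral f g a b I \<longleftrightarrow>
     (\<forall>\<epsilon>>0. \<exists>\<delta>>0. \<forall>n x \<xi>. is_partition a b n x \<and> (\<forall>i<n. x (Suc i) - x i < \<delta>)
        \<and> (\<forall>i<n. x i \<le> \<xi> i \<and> \<xi> i \<le> x (Suc i))
        \<longrightarrow> \<bar>(\<Sum>i<n. f (\<xi> i) * (g (x (Suc i)) - g (x i))) - I\<bar> < \<epsilon>)"

definition RS_integral :: "(real \<Rightarrow> real) \<Rightarrow> (real \<Rightarrow> real) \<Rightarrow> real \<Rightarrow> real \<Rightarrow> real" where
  "RS_integral f g a b = (THE I. has_RS_integral f g a b I)"

text \<open>Coordinates of the level-k signature S(g)^k_{a,t} in the orthonormal tensor basis
  e_{i_1} \<otimes> ... \<otimes> e_{i_k}.  The index list is stored in reverse order: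
  the head is the last index i_k, so
  S^{k+1}(i_1..i_k i_{k+1})_{a,t} = \<integral>_a^t S^k(i_1..i_k)_{a,u} d<g_u, e_{i_{k+1}}>.\<close>
fun sig_coord :: "(real \<Rightarrow> 'a::euclidean_space) \<Rightarrow> real \<Rightarrow> real \<Rightarrow> 'a list \<Rightarrow> real" where
  "sig_coord g a t [] = 1"
| "sig_coord g a t (i # is) = RS_integral (\<lambda>u. sig_coord g a u is) (\<lambda>u. g u \<bullet> i) a t"

definition sig_inner :: "nat \<Rightarrow> (real \<Rightarrow> 'a::euclidean_space) \<Rightarrow> (real \<Rightarrow> 'a) \<Rightarrow> real \<Rightarrow> real \<Rightarrow> real \<Rightarrow> real" where
  "sig_inner k g h a s t =
     (\<Sum>is\<in>{is. set is \<subseteq> Basis \<and> length is = k}. sig_coord g a s is * sig_coord h a t is)"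

definition sig_kernel :: "(nat \<Rightarrow> real) \<Rightarrow> (real \<Rightarrow> 'a::euclidean_space) \<Rightarrow> (real \<Rightarrow> 'a) \<Rightarrow> real \<Rightarrow> real \<Rightarrow> real \<Rightarrow> real" where
  "sig_kernel \<phi> g h a s t = (\<Sum>k. \<phi> k * sig_inner k g h a s t)"

end

theory Submission
  imports Defs
begin

(* Scaling \<gamma> by \<theta> scales every Riemann--Stieltjes integral against a coordinate of \<gamma> by \<theta>,
   so each level-k signature coordinate of \<theta>\<gamma> is \<theta>^k times that of \<gamma>, and the first two
   identities hold term by term in the kernel series.

   For the integral equation, the level-(k+1) pairing of the signatures is the double integral of
   the level-k pairing against d(\<gamma> . e_i) d(\<sigma> . e_i), summed over the basis vectors e_i.
   Integrating the kernel series term by term therefore gives the claim, and the interchange of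
   sums and integrals is justified by factorial decay: a path of bounded variation has a control
   V (its variation function), and its level-k signature coordinates are bounded by V^k/k!.

   Against a controlled integrator, integration commutes with uniform limits; since a
   continuous integrand is a uniform limit of step functions, whose integrals against a continuous
   integrator are explicit, its indefinite integral exists and is continuous. *)

section \<open>Partitions\<close>

lemma is_partition_mono:
  assumes P: "is_partition a b n x" and "i \<le> j" "j \<le> n"
  shows "x i \<le> x j"
  using \<open>i \<le> j\<close> \<open>j \<le> n\<close>
proof (induction j rule: dec_induct)
  case (step k)
  then have "x i \<le> x k" by simp
  moreover have "x k \<le> x (Suc k)" using P step.prems unfolding is_partition_def by simp
  ultimately show ?case by (rule order_trans)
qed simp

lemma is_partition_mem:
  assumes P: "is_partition a b n x" and "i \<le> n"
  shows "x i \<in> {a..b}"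
  using is_partition_mono[OF P, of 0 i] is_partition_mono[OF P, of i n] P assms(2)
  unfolding is_partition_def by auto

lemma is_partition_step:
  assumes "is_partition a b n x" "i < n"
  shows "a \<le> x i" "x i \<le> x (Suc i)" "x (Suc i) \<le> b"
  using is_partition_mem[OF assms(1), of i] is_partition_mem[OF assms(1), of "Suc i"] assms
  by (auto simp: is_partition_def)

definition uniform_partition :: "real \<Rightarrow> real \<Rightarrow> nat \<Rightarrow> nat \<Rightarrow> real" where
  "uniform_partition a b N k = a + real k * ((b - a) / real N)"

lemma uniform_partition_step:
  "uniform_partition a b N (Suc k) - uniform_partition a b N k = (b - a) / real N"
  unfolding uniform_partition_def of_nat_Suc distrib_right by simp

lemma uniform_partition_le_Suc:
  assumes "a \<le> b"
  shows "uniform_partition a b N k \<le> uniform_partition a b N (Suc k)"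
proof -
  have "0 \<le> (b - a) / real N" using assms by simp
  then show ?thesis using uniform_partition_step[of a b N k] by linarith
qed

lemma uniform_partition_ge: "a \<le> b \<Longrightarrow> a \<le> uniform_partition a b N k"
  by (simp add: uniform_partition_def)

lemma is_partition_uniform:
  assumes "a \<le> b" "N > 0"
  shows "is_partition a b N (uniform_partition a b N)"
  using assms uniform_partition_le_Suc[OF assms(1)] unfolding is_partition_def
  by (simp add: uniform_partition_def)


section \<open>Riemann--Stieltjes sums along a vanishing mesh\<close>

definition RS_sum :: "(real \<Rightarrow> real) \<Rightarrow> (real \<Rightarrow> real) \<Rightarrow> nat \<times> (nat \<Rightarrow> real) \<times> (nat \<Rightarrow> real) \<Rightarrow> real"
  where "RS_sum f g = (\<lambda>(n, x, \<xi>). \<Sum>i<n. f (\<xi> i) * (g (x (Suc i)) - g (x i)))"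

lemma RS_sum_eq: "RS_sum f g (n, x, \<xi>) = (\<Sum>i<n. f (\<xi> i) * (g (x (Suc i)) - g (x i)))"
  by (simp add: RS_sum_def)

definition tagged_partitions :: "real \<Rightarrow> real \<Rightarrow> (nat \<times> (nat \<Rightarrow> real) \<times> (nat \<Rightarrow> real)) set" where
  "tagged_partitions a b = {(n, x, \<xi>). is_partition a b n x \<and> (\<forall>i<n. x i \<le> \<xi> i \<and> \<xi> i \<le> x (Suc i))}"

lemma tagged_partitions_tag_mem:
  "(n, x, \<xi>) \<in> tagged_partitions a b \<Longrightarrow> i < n \<Longrightarrow> \<xi> i \<in> {a..b}"
  unfolding tagged_partitions_def
  using is_partition_mem[of a b n x i] is_partition_mem[of a b n x "Suc i"] by fastforce

lemma tagged_partitions_tag_mono: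
  assumes "(n, x, \<xi>) \<in> tagged_partitions a b" "i < j" "j < n"
  shows "\<xi> i \<le> \<xi> j"
proof -
  have P: "is_partition a b n x" and T: "\<And>i. i < n \<Longrightarrow> x i \<le> \<xi> i \<and> \<xi> i \<le> x (Suc i)"
    using assms(1) by (auto simp: tagged_partitions_def)
  have "\<xi> i \<le> x (Suc i)" using T assms(2,3) by simp
  also have "\<dots> \<le> x j" using is_partition_mono[OF P, of "Suc i" j] assms(2,3) by simp
  also have "\<dots> \<le> \<xi> j" using T assms(3) by simp
  finally show ?thesis .
qed

definition vanishing_mesh :: "real \<Rightarrow> real \<Rightarrow> (nat \<times> (nat \<Rightarrow> real) \<times> (nat \<Rightarrow> real)) filter" where
  "vanishing_mesh a b =
     (INF d\<in>{0<..}. principal {(n, x, \<xi>) \<in> tagged_partitions a b. \<forall>i<n. x (Suc i) - x i < d})"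

lemma eventually_vanishing_mesh:
  "eventually P (vanishing_mesh a b) \<longleftrightarrow>
     (\<exists>d>0. \<forall>n x \<xi>. (n, x, \<xi>) \<in> tagged_partitions a b \<and> (\<forall>i<n. x (Suc i) - x i < d) \<longrightarrow> P (n, x, \<xi>))"
proof -
  have "eventually P (vanishing_mesh a b) \<longleftrightarrow>
      (\<exists>d\<in>{0<..}. eventually P (principal {(n, x, \<xi>) \<in> tagged_partitions a b. \<forall>i<n. x (Suc i) - x i < d}))"
    unfolding vanishing_mesh_def
    by (rule eventually_INF_base) (auto intro!: bexI[of _ "min _ _"])
  then show ?thesis by (auto simp: eventually_principal)
qed

lemma has_RS_integral_iff_tendsto:
  "has_RS_integral f g a b I \<longleftrightarrow> (RS_sum f g \<longlongrightarrow> I) (vanishing_mesh a b)"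
  unfolding has_RS_integral_def tendsto_iff eventually_vanishing_mesh
  by (simp add: tagged_partitions_def RS_sum_def dist_real_def conj_commute conj_left_commute)

lemma eventually_tagged_partitions: "\<forall>\<^sub>F p in vanishing_mesh a b. p \<in> tagged_partitions a b"
  unfolding eventually_vanishing_mesh by (auto intro: exI[of _ 1])

definition left_tagged_uniform_partition :: "real \<Rightarrow> real \<Rightarrow> nat \<Rightarrow> nat \<times> (nat \<Rightarrow> real) \<times> (nat \<Rightarrow> real)"
  where "left_tagged_uniform_partition a b N =
           (Suc N, uniform_partition a b (Suc N), uniform_partition a b (Suc N))"

lemma left_tagged_uniform_partition_mem:
  "a \<le> b \<Longrightarrow> left_tagged_uniform_partition a b N \<in> tagged_partitions a b"
  using is_partition_uniform[of a b "Suc N"]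
  by (auto simp: left_tagged_uniform_partition_def tagged_partitions_def is_partition_def)

lemma filterlim_left_tagged_uniform_partition:
  assumes "a \<le> b"
  shows "filterlim (left_tagged_uniform_partition a b) (vanishing_mesh a b) sequentially"
  unfolding vanishing_mesh_def filterlim_INF filterlim_principal
proof (intro ballI)
  fix d :: real assume "d \<in> {0<..}"
  have "(\<lambda>N. (b - a) / real (Suc N)) \<longlonglongrightarrow> 0"
    using LIMSEQ_Suc[OF lim_const_over_n[of "b - a"]] by simp
  then have "\<forall>\<^sub>F N in sequentially. (b - a) / real (Suc N) < d"
    using \<open>d \<in> {0<..}\<close> by (auto dest: order_tendstoD(2))
  then show "\<forall>\<^sub>F N in sequentially. left_tagged_uniform_partition a b N
      \<in> {(n, x, \<xi>) \<in> tagged_partitions a b. \<forall>i<n. x (Suc i) - x i < d}"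
  proof (rule eventually_mono)
    fix N assume "(b - a) / real (Suc N) < d"
    then have "\<forall>i<Suc N. uniform_partition a b (Suc N) (Suc i) - uniform_partition a b (Suc N) i < d"
      by (simp only: uniform_partition_step) simp
    then show "left_tagged_uniform_partition a b N
        \<in> {(n, x, \<xi>) \<in> tagged_partitions a b. \<forall>i<n. x (Suc i) - x i < d}"
      using left_tagged_uniform_partition_mem[OF assms, of N]
      unfolding left_tagged_uniform_partition_def by simp
  qed
qed

lemma has_RS_integral_imp_left_uniform_sums:
  assumes "a \<le> b" "has_RS_integral f g a b I"
  shows "(\<lambda>N. RS_sum f g (left_tagged_uniform_partition a b N)) \<longlonglongrightarrow> I"
proof -
  have "(RS_sum f g \<longlongrightarrow> I) (vanishing_mesh a b)"
    using assms(2) unfolding has_RS_integral_iff_tendsto .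
  from filterlim_compose[OF this filterlim_left_tagged_uniform_partition[OF assms(1)]] show ?thesis .
qed

lemma has_RS_integral_unique:
  assumes "a \<le> b" "has_RS_integral f g a b I" "has_RS_integral f g a b J"
  shows "I = J"
  using LIMSEQ_unique has_RS_integral_imp_left_uniform_sums[OF assms(1,2)]
    has_RS_integral_imp_left_uniform_sums[OF assms(1,3)] .

lemma RS_integral_unique:
  assumes "a \<le> b" "has_RS_integral f g a b I"
  shows "RS_integral f g a b = I"
  unfolding RS_integral_def
  using assms(2) by (rule the_equality) (rule has_RS_integral_unique[OF assms(1) _ assms(2)])

lemma abs_has_RS_integral_le:
  assumes "a \<le> b" "has_RS_integral f g a b I"
    and B: "\<And>n x. is_partition a b n x \<Longrightarrow> \<bar>RS_sum f g (n, x, x)\<bar> \<le> B"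
  shows "\<bar>I\<bar> \<le> B"
proof (rule LIMSEQ_le_const2)
  show "(\<lambda>N. \<bar>RS_sum f g (left_tagged_uniform_partition a b N)\<bar>) \<longlonglongrightarrow> \<bar>I\<bar>"
    by (intro tendsto_rabs has_RS_integral_imp_left_uniform_sums assms)
  show "\<exists>N. \<forall>n\<ge>N. \<bar>RS_sum f g (left_tagged_uniform_partition a b n)\<bar> \<le> B"
    using B is_partition_uniform[OF \<open>a \<le> b\<close>] by (simp add: left_tagged_uniform_partition_def)
qed

lemma RS_sum_add: "RS_sum (\<lambda>u. f u + f' u) g p = RS_sum f g p + RS_sum f' g p"
  by (cases p) (simp add: RS_sum_def distrib_right sum.distrib)

lemma RS_sum_cmult: "RS_sum (\<lambda>u. c * f u) g p = c * RS_sum f g p"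
  by (cases p) (simp add: RS_sum_def sum_distrib_left mult.assoc)

lemma RS_sum_diff: "RS_sum (\<lambda>u. f u - f' u) g p = RS_sum f g p - RS_sum f' g p"
  by (cases p) (simp add: RS_sum_def left_diff_distrib sum_subtractf)

lemma RS_sum_sum: "RS_sum (\<lambda>u. \<Sum>k\<in>K. f k u) g p = (\<Sum>k\<in>K. RS_sum (f k) g p)"
  by (cases p) (simp add: RS_sum_def sum_distrib_right, rule sum.swap)

lemma RS_sum_scale_integrator: "RS_sum f (\<lambda>u. c * g u) p = RS_sum (\<lambda>u. c * f u) g p"
  by (cases p) (simp add: RS_sum_def algebra_simps)

lemma has_RS_integral_add:
  "has_RS_integral f g a b I \<Longrightarrow> has_RS_integral f' g a b I' \<Longrightarrow>
     has_RS_integral (\<lambda>u. f u + f' u) g a b (I + I')"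
  unfolding has_RS_integral_iff_tendsto RS_sum_add by (rule tendsto_add)

lemma has_RS_integral_cmult:
  "has_RS_integral f g a b I \<Longrightarrow> has_RS_integral (\<lambda>u. c * f u) g a b (c * I)"
  unfolding has_RS_integral_iff_tendsto RS_sum_cmult by (rule tendsto_mult_left)

lemma has_RS_integral_diff:
  "has_RS_integral f g a b I \<Longrightarrow> has_RS_integral f' g a b I' \<Longrightarrow>
     has_RS_integral (\<lambda>u. f u - f' u) g a b (I - I')"
  unfolding has_RS_integral_iff_tendsto RS_sum_diff by (rule tendsto_diff)

lemma has_RS_integral_sum:
  "(\<And>k. k \<in> K \<Longrightarrow> has_RS_integral (f k) g a b (I k)) \<Longrightarrow>
     has_RS_integral (\<lambda>u. \<Sum>k\<in>K. f k u) g a b (\<Sum>k\<in>K. I k)"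
  unfolding has_RS_integral_iff_tendsto RS_sum_sum by (rule tendsto_sum)

lemma has_RS_integral_scale_integrator:
  "has_RS_integral f (\<lambda>u. c * g u) a b I \<longleftrightarrow> has_RS_integral (\<lambda>u. c * f u) g a b I"
  unfolding has_RS_integral_iff_tendsto RS_sum_scale_integrator ..

lemma has_RS_integral_cong:
  assumes "\<And>u. u \<in> {a..b} \<Longrightarrow> f u = f' u"
  shows "has_RS_integral f g a b I \<longleftrightarrow> has_RS_integral f' g a b I"
proof -
  have "\<forall>\<^sub>F p in vanishing_mesh a b. RS_sum f g p = RS_sum f' g p"
    using eventually_tagged_partitions
    by eventually_elim
      (auto simp: RS_sum_def assms[OF tagged_partitions_tag_mem] intro!: sum.cong)
  then show ?thesis unfolding has_RS_integral_iff_tendsto by (rule tendsto_cong)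
qed


section \<open>Controlled integrators\<close>

definition controls :: "(real \<Rightarrow> real) \<Rightarrow> (real \<Rightarrow> 'a::real_normed_vector) \<Rightarrow> real \<Rightarrow> real \<Rightarrow> bool"
  where "controls W g a b \<longleftrightarrow> (\<forall>x y. a \<le> x \<longrightarrow> x \<le> y \<longrightarrow> y \<le> b \<longrightarrow> norm (g y - g x) \<le> W y - W x)"

lemma controlsD:
  "controls W g a b \<Longrightarrow> a \<le> x \<Longrightarrow> x \<le> y \<Longrightarrow> y \<le> b \<Longrightarrow> norm (g y - g x) \<le> W y - W x"
  unfolding controls_def by blast

lemma controls_subinterval: "controls W g a b \<Longrightarrow> a \<le> c \<Longrightarrow> d \<le> b \<Longrightarrow> controls W g c d"
  unfolding controls_def by (meson order.trans)

lemma controls_mono: "controls W g a b \<Longrightarrow> a \<le> x \<Longrightarrow> x \<le> y \<Longrightarrow> y \<le> b \<Longrightarrow> W x \<le> W y"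
  using controlsD[of W g a b x y] norm_ge_zero[of "g y - g x"] by linarith

lemma controls_inner_Basis:
  fixes g :: "real \<Rightarrow> 'a::euclidean_space"
  assumes W: "controls W g a b" and i: "i \<in> Basis"
  shows "controls W (\<lambda>u. g u \<bullet> i) a b"
  unfolding controls_def
proof (intro allI impI)
  fix x y assume xy: "a \<le> x" "x \<le> y" "y \<le> b"
  have "norm (g y \<bullet> i - g x \<bullet> i) = \<bar>(g y - g x) \<bullet> i\<bar>" by (simp add: inner_diff_left)
  also have "\<dots> \<le> norm (g y - g x)" by (rule Basis_le_norm[OF i])
  also have "\<dots> \<le> W y - W x" by (rule controlsD[OF W xy])
  finally show "norm (g y \<bullet> i - g x \<bullet> i) \<le> W y - W x" .
qed

definition variation_sums :: "(real \<Rightarrow> 'a::real_normed_vector) \<Rightarrow> real \<Rightarrow> real \<Rightarrow> real set" where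
  "variation_sums \<gamma> a x = {\<Sum>i<n. norm (\<gamma> (p (Suc i)) - \<gamma> (p i)) | n p. is_partition a x n p}"

lemma zero_mem_variation_sums: "0 \<in> variation_sums \<gamma> a a"
  unfolding variation_sums_def
  by (rule CollectI, rule exI[of _ 0], rule exI[of _ "\<lambda>_. a"]) (simp add: is_partition_def)

lemma variation_sums_extend:
  assumes s: "s \<in> variation_sums \<gamma> a x" and xy: "x \<le> y"
  shows "s + norm (\<gamma> y - \<gamma> x) \<in> variation_sums \<gamma> a y"
proof -
  obtain n p where s: "s = (\<Sum>i<n. norm (\<gamma> (p (Suc i)) - \<gamma> (p i)))" and P: "is_partition a x n p"
    using s unfolding variation_sums_def by blast
  let ?q = "p(Suc n := y)"
  have "(\<Sum>i<n. norm (\<gamma> (?q (Suc i)) - \<gamma> (?q i))) = s"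
    unfolding s by (intro sum.cong) auto
  then have "s + norm (\<gamma> y - \<gamma> x) = (\<Sum>i<Suc n. norm (\<gamma> (?q (Suc i)) - \<gamma> (?q i)))"
    using P by (simp add: is_partition_def)
  moreover have "is_partition a y (Suc n) ?q"
    using P xy unfolding is_partition_def by (auto simp: less_Suc_eq)
  ultimately show ?thesis
    unfolding variation_sums_def by (intro CollectI exI[of _ "Suc n"] exI[of _ ?q] conjI)
qed

lemma bdd_above_variation_sums:
  assumes bv: "bounded_variation_on a b \<gamma>" and "x \<le> b"
  shows "bdd_above (variation_sums \<gamma> a x)"
proof -
  obtain M where M: "\<And>n p. is_partition a b n p \<Longrightarrow> (\<Sum>i<n. norm (\<gamma> (p (Suc i)) - \<gamma> (p i))) \<le> M"
    using bv unfolding bounded_variation_on_def by blast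
  show ?thesis
  proof (rule bdd_aboveI)
    fix s assume "s \<in> variation_sums \<gamma> a x"
    then have "s + norm (\<gamma> b - \<gamma> x) \<in> variation_sums \<gamma> a b"
      using variation_sums_extend \<open>x \<le> b\<close> by blast
    then obtain n p where "s + norm (\<gamma> b - \<gamma> x) = (\<Sum>i<n. norm (\<gamma> (p (Suc i)) - \<gamma> (p i)))"
      and "is_partition a b n p"
      unfolding variation_sums_def by blast
    then have "s + norm (\<gamma> b - \<gamma> x) \<le> M" using M by simp
    then show "s \<le> M" using norm_ge_zero[of "\<gamma> b - \<gamma> x"] by linarith
  qed
qed

lemma bounded_variation_on_controls:
  fixes \<gamma> :: "real \<Rightarrow> 'a::real_normed_vector"
  assumes bv: "bounded_variation_on a b \<gamma>"
  obtains V where "controls V \<gamma> a b" "V a = 0"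
proof -
  define V where "V x = Sup (variation_sums \<gamma> a x) - Sup (variation_sums \<gamma> a a)" for x
  have "norm (\<gamma> y - \<gamma> x) \<le> V y - V x" if "a \<le> x" "x \<le> y" "y \<le> b" for x y
  proof -
    have "variation_sums \<gamma> a x \<noteq> {}"
      using variation_sums_extend[OF zero_mem_variation_sums \<open>a \<le> x\<close>] by blast
    then have "Sup (variation_sums \<gamma> a x) \<le> Sup (variation_sums \<gamma> a y) - norm (\<gamma> y - \<gamma> x)"
    proof (rule cSup_least)
      fix s assume "s \<in> variation_sums \<gamma> a x"
      then have "s + norm (\<gamma> y - \<gamma> x) \<le> Sup (variation_sums \<gamma> a y)"
        using variation_sums_extend \<open>x \<le> y\<close> bdd_above_variation_sums[OF bv \<open>y \<le> b\<close>]
        by (blast intro: cSup_upper)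
      then show "s \<le> Sup (variation_sums \<gamma> a y) - norm (\<gamma> y - \<gamma> x)" by linarith
    qed
    then show ?thesis unfolding V_def by linarith
  qed
  then have "controls V \<gamma> a b" unfolding controls_def by blast
  moreover have "V a = 0" by (simp add: V_def)
  ultimately show thesis by (rule that)
qed

lemma abs_increment_sum_le_controls:
  fixes g :: "real \<Rightarrow> real"
  assumes P: "is_partition a b n x" and W: "controls W g a b" and h: "\<And>i. i < n \<Longrightarrow> \<bar>h i\<bar> \<le> K"
  shows "\<bar>\<Sum>i<n. h i * (g (x (Suc i)) - g (x i))\<bar> \<le> K * (W b - W a)"
proof -
  have "\<bar>\<Sum>i<n. h i * (g (x (Suc i)) - g (x i))\<bar> \<le> (\<Sum>i<n. K * (W (x (Suc i)) - W (x i)))"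
  proof (rule order_trans[OF sum_abs sum_mono])
    fix i assume "i \<in> {..<n}"
    then have "\<bar>g (x (Suc i)) - g (x i)\<bar> \<le> W (x (Suc i)) - W (x i)"
      using controlsD[OF W is_partition_step[OF P]] by simp
    then show "\<bar>h i * (g (x (Suc i)) - g (x i))\<bar> \<le> K * (W (x (Suc i)) - W (x i))"
      unfolding abs_mult using h[of i] \<open>i \<in> {..<n}\<close> by (intro mult_mono) auto
  qed
  also have "\<dots> = K * (W (x n) - W (x 0))"
    by (simp only: sum_distrib_left[symmetric] sum_lessThan_telescope[of "\<lambda>i. W (x i)"])
  also have "\<dots> = K * (W b - W a)"
    using P by (simp add: is_partition_def)
  finally show ?thesis .
qed

lemma abs_RS_sum_le_controls:
  assumes p: "p \<in> tagged_partitions a b" and W: "controls W g a b"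
    and h: "\<And>u. u \<in> {a..b} \<Longrightarrow> \<bar>h u\<bar> \<le> K"
  shows "\<bar>RS_sum h g p\<bar> \<le> K * (W b - W a)"
proof (cases p rule: prod_cases3)
  case (fields n x \<xi>)
  have "is_partition a b n x" using p fields by (simp add: tagged_partitions_def)
  then show ?thesis
    unfolding fields RS_sum_eq
    by (intro abs_increment_sum_le_controls[OF _ W] h)
      (use tagged_partitions_tag_mem[OF p[unfolded fields]] in blast)+
qed

lemma power_Suc_diff_ge:
  fixes p q :: real
  assumes "0 \<le> p" "p \<le> q"
  shows "real (Suc k) * p ^ k * (q - p) \<le> q ^ Suc k - p ^ Suc k"
proof (induction k)
  case (Suc k)
  have "q * (real (Suc k) * p ^ k * (q - p)) + p ^ Suc k * (q - p)
      \<le> q * (q ^ Suc k - p ^ Suc k) + p ^ Suc k * (q - p)"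
    using Suc assms by (intro add_right_mono mult_left_mono) auto
  moreover have "p * (real (Suc k) * p ^ k * (q - p)) \<le> q * (real (Suc k) * p ^ k * (q - p))"
    using assms by (intro mult_right_mono) auto
  ultimately show ?case by (simp add: algebra_simps)
qed simp

text \<open>The source of the factorial decay V^k/k! of signature coordinates.\<close>
lemma abs_increment_sum_le_controls_power:
  fixes g :: "real \<Rightarrow> real"
  assumes P: "is_partition a b n x" and W: "controls W g a b" "W a = 0"
    and h: "\<And>i. i < n \<Longrightarrow> \<bar>h i\<bar> \<le> W (x i) ^ k / fact k"
  shows "\<bar>\<Sum>i<n. h i * (g (x (Suc i)) - g (x i))\<bar> \<le> W b ^ Suc k / fact (Suc k)"
proof -
  have "\<bar>\<Sum>i<n. h i * (g (x (Suc i)) - g (x i))\<bar>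
      \<le> (\<Sum>i<n. W (x (Suc i)) ^ Suc k / fact (Suc k) - W (x i) ^ Suc k / fact (Suc k))"
  proof (rule order_trans[OF sum_abs sum_mono])
    fix i assume "i \<in> {..<n}"
    note step = is_partition_step[OF P, of i]
    have inc: "\<bar>g (x (Suc i)) - g (x i)\<bar> \<le> W (x (Suc i)) - W (x i)"
      using controlsD[OF W(1) step] \<open>i \<in> {..<n}\<close> by simp
    have W0: "0 \<le> W (x i)" and Wi: "W (x i) \<le> W (x (Suc i))"
      using controls_mono[OF W(1), of a "x i"] controls_mono[OF W(1), of "x i" "x (Suc i)"]
        step \<open>i \<in> {..<n}\<close> W(2) by auto
    have "\<bar>h i * (g (x (Suc i)) - g (x i))\<bar> \<le> W (x i) ^ k / fact k * (W (x (Suc i)) - W (x i))"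
      unfolding abs_mult using h \<open>i \<in> {..<n}\<close> inc W0 by (intro mult_mono) auto
    also have "\<dots> = real (Suc k) * W (x i) ^ k * (W (x (Suc i)) - W (x i)) / fact (Suc k)"
      unfolding fact_Suc of_nat_mult by simp
    also have "\<dots> \<le> (W (x (Suc i)) ^ Suc k - W (x i) ^ Suc k) / fact (Suc k)"
      using power_Suc_diff_ge[OF W0 Wi, of k] by (intro divide_right_mono) auto
    finally show "\<bar>h i * (g (x (Suc i)) - g (x i))\<bar>
        \<le> W (x (Suc i)) ^ Suc k / fact (Suc k) - W (x i) ^ Suc k / fact (Suc k)"
      by (simp add: diff_divide_distrib)
  qed
  also have "\<dots> = W (x n) ^ Suc k / fact (Suc k) - W (x 0) ^ Suc k / fact (Suc k)"
    by (rule sum_lessThan_telescope)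
  also have "\<dots> = W b ^ Suc k / fact (Suc k)"
    using P W(2) by (simp add: is_partition_def)
  finally show ?thesis .
qed

lemma has_RS_integral_dist_le:
  assumes ab: "a \<le> b" and W: "controls W g a b"
    and I: "has_RS_integral f g a b I" and I': "has_RS_integral f' g a b I'"
    and e: "\<And>u. u \<in> {a..b} \<Longrightarrow> \<bar>f u - f' u\<bar> \<le> e"
  shows "\<bar>I - I'\<bar> \<le> e * (W b - W a)"
proof (rule abs_has_RS_integral_le[OF ab has_RS_integral_diff[OF I I']])
  fix n x assume "is_partition a b n x"
  then have "(n, x, x) \<in> tagged_partitions a b" by (auto simp: tagged_partitions_def is_partition_def)
  then show "\<bar>RS_sum (\<lambda>u. f u - f' u) g (n, x, x)\<bar> \<le> e * (W b - W a)"
    by (rule abs_RS_sum_le_controls[OF _ W e])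
qed

lemma divide_add_one_mult_less: "0 \<le> D \<Longrightarrow> 0 < e \<Longrightarrow> e / (D + 1) * D < (e :: real)"
  by (simp add: field_simps)

lemma uniform_limit_RS_sum:
  assumes ab: "a \<le> b" and W: "controls W g a b" and lim: "uniform_limit {a..b} f h F"
  shows "uniform_limit (tagged_partitions a b) (\<lambda>n. RS_sum (f n) g) (RS_sum h g) F"
proof (rule uniform_limitI)
  fix e :: real assume "e > 0"
  define D where "D = W b - W a"
  have "D \<ge> 0" using controls_mono[OF W order_refl ab order_refl] by (simp add: D_def)
  then have "e / (D + 1) > 0" using \<open>e > 0\<close> by simp
  with lim have "\<forall>\<^sub>F n in F. \<forall>u\<in>{a..b}. \<bar>f n u - h u\<bar> < e / (D + 1)"
    unfolding uniform_limit_iff dist_real_def by blast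
  then show "\<forall>\<^sub>F n in F. \<forall>p\<in>tagged_partitions a b. dist (RS_sum (f n) g p) (RS_sum h g p) < e"
  proof eventually_elim
    case (elim n)
    show ?case
    proof
      fix p assume "p \<in> tagged_partitions a b"
      then have "\<bar>RS_sum (\<lambda>u. f n u - h u) g p\<bar> \<le> e / (D + 1) * (W b - W a)"
        by (rule abs_RS_sum_le_controls[OF _ W]) (use elim in fastforce)
      also have "\<dots> = e / (D + 1) * D" by (simp add: D_def)
      also have "\<dots> < e" by (rule divide_add_one_mult_less[OF \<open>D \<ge> 0\<close> \<open>e > 0\<close>])
      finally show "dist (RS_sum (f n) g p) (RS_sum h g p) < e"
        by (simp add: dist_real_def RS_sum_diff)
    qed
  qed
qed

lemma convergent_RS_integrals_uniform_limit:
  fixes f :: "nat \<Rightarrow> real \<Rightarrow> real"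
  assumes ab: "a \<le> b" and W: "controls W g a b"
    and I: "\<And>n. has_RS_integral (f n) g a b (I n)"
    and lim: "uniform_limit {a..b} f h sequentially"
  shows "convergent I"
proof -
  define D where "D = W b - W a"
  have "D \<ge> 0" using controls_mono[OF W order_refl ab order_refl] by (simp add: D_def)
  have "Cauchy I"
  proof (rule CauchyI)
    fix e :: real assume "e > 0"
    then have "e / (D + 1) / 2 > 0" using \<open>D \<ge> 0\<close> by simp
    with lim obtain M where M: "\<And>n u. n \<ge> M \<Longrightarrow> u \<in> {a..b} \<Longrightarrow> \<bar>f n u - h u\<bar> < e / (D + 1) / 2"
      unfolding uniform_limit_sequentially_iff dist_real_def by meson
    have "\<bar>I m - I n\<bar> < e" if "m \<ge> M" "n \<ge> M" for m n
    proof -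
      have "\<bar>I m - I n\<bar> \<le> e / (D + 1) * (W b - W a)"
      proof (rule has_RS_integral_dist_le[OF ab W I I])
        fix u assume "u \<in> {a..b}"
        then have "\<bar>f m u - h u\<bar> < e / (D + 1) / 2" "\<bar>f n u - h u\<bar> < e / (D + 1) / 2"
          using M that by auto
        moreover have "e / (D + 1) / 2 + e / (D + 1) / 2 = e / (D + 1)"
          by (rule field_sum_of_halves)
        ultimately show "\<bar>f m u - f n u\<bar> \<le> e / (D + 1)"
          unfolding abs_less_iff abs_le_iff by linarith
      qed
      also have "\<dots> = e / (D + 1) * D" by (simp add: D_def)
      also have "\<dots> < e" by (rule divide_add_one_mult_less[OF \<open>D \<ge> 0\<close> \<open>e > 0\<close>])
      finally show ?thesis .
    qed
    then show "\<exists>M. \<forall>m\<ge>M. \<forall>n\<ge>M. norm (I m - I n) < e" by auto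
  qed
  then show ?thesis by (simp add: Cauchy_convergent_iff)
qed

lemma has_RS_integral_uniform_limit:
  fixes f :: "nat \<Rightarrow> real \<Rightarrow> real"
  assumes ab: "a \<le> b" and W: "controls W g a b"
    and I: "\<And>n. has_RS_integral (f n) g a b (I n)"
    and lim: "uniform_limit {a..b} f h sequentially"
  shows "convergent I" and "has_RS_integral h g a b (lim I)"
proof -
  show conv: "convergent I" by (rule convergent_RS_integrals_uniform_limit[OF ab W I lim])
  show "has_RS_integral h g a b (lim I)"
    unfolding has_RS_integral_iff_tendsto
  proof (rule swap_uniform_limit'[OF _ _ uniform_limit_RS_sum[OF ab W lim]])
    show "\<forall>\<^sub>F n in sequentially. (RS_sum (f n) g \<longlongrightarrow> I n) (vanishing_mesh a b)"
      using I by (simp add: has_RS_integral_iff_tendsto)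
    show "I \<longlonglongrightarrow> lim I" using conv by (simp add: convergent_LIMSEQ_iff)
  qed (simp_all add: eventually_tagged_partitions)
qed

lemma has_RS_integral_suminf:
  assumes ab: "a \<le> b" and W: "controls W g a b"
    and I: "\<And>k. has_RS_integral (f k) g a b (I k)"
    and bound: "\<And>k u. u \<in> {a..b} \<Longrightarrow> \<bar>f k u\<bar> \<le> m k" and m: "summable m"
  shows "summable I" and "has_RS_integral (\<lambda>u. \<Sum>k. f k u) g a b (\<Sum>k. I k)"
proof -
  have "uniform_limit {a..b} (\<lambda>n u. \<Sum>k<n. f k u) (\<lambda>u. \<Sum>k. f k u) sequentially"
    using Weierstrass_m_test[of "{a..b}" f m] bound m by simp
  note lim = has_RS_integral_uniform_limit[OF ab W has_RS_integral_sum[OF I] this]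
  show "summable I" using lim(1) by (simp add: summable_iff_convergent)
  show "has_RS_integral (\<lambda>u. \<Sum>k. f k u) g a b (\<Sum>k. I k)" using lim(2) by (simp add: suminf_eq_lim)
qed


section \<open>Continuous integrands\<close>

lemma RS_sum_one: "p \<in> tagged_partitions a b \<Longrightarrow> RS_sum (\<lambda>_. 1) g p = g b - g a"
  by (cases p rule: prod_cases3)
    (simp add: RS_sum_eq sum_lessThan_telescope[of "\<lambda>i. g (_ i)"] tagged_partitions_def is_partition_def)

lemma has_RS_integral_one: "has_RS_integral (\<lambda>_. 1) g a b (g b - g a)"
  unfolding has_RS_integral_iff_tendsto
  using eventually_tagged_partitions
  by (rule tendsto_eventually[OF eventually_mono]) (rule RS_sum_one)

lemma tagged_partitions_split:
  fixes c :: real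
  assumes p: "(n, x, \<xi>) \<in> tagged_partitions a b"
  obtains m where "m \<le> n" "\<And>i. i < m \<Longrightarrow> \<xi> i \<le> c" "\<And>i. m \<le> i \<Longrightarrow> i < n \<Longrightarrow> c < \<xi> i"
proof -
  define m where "m = (LEAST i. i = n \<or> c < \<xi> i)"
  have "m \<le> n" unfolding m_def by (rule Least_le) simp
  moreover have "\<xi> i \<le> c" if "i < m" for i
    using not_less_Least[OF that[unfolded m_def]] by auto
  moreover have "c < \<xi> i" if "m \<le> i" "i < n" for i
  proof -
    have "m = n \<or> c < \<xi> m" unfolding m_def by (rule LeastI[of _ n]) simp
    then have "c < \<xi> m" using that by simp
    then show ?thesis
      using tagged_partitions_tag_mono[OF p, of m i] that by (cases "m = i") auto
  qed
  ultimately show thesis by (rule that)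
qed

lemma RS_sum_indicator_atMost:
  assumes p: "(n, x, \<xi>) \<in> tagged_partitions a b" and mesh: "\<forall>i<n. x (Suc i) - x i < d"
    and "d > 0" "a \<le> c" "c < b"
  obtains m where "m \<le> n" "RS_sum (indicator {..c}) g (n, x, \<xi>) = g (x m) - g a" "\<bar>x m - c\<bar> < d"
proof -
  have P: "is_partition a b n x" and T: "\<And>i. i < n \<Longrightarrow> x i \<le> \<xi> i \<and> \<xi> i \<le> x (Suc i)"
    using p by (auto simp: tagged_partitions_def)
  obtain m where "m \<le> n" and below: "\<And>i. i < m \<Longrightarrow> \<xi> i \<le> c"
    and above: "\<And>i. m \<le> i \<Longrightarrow> i < n \<Longrightarrow> c < \<xi> i"
    by (rule tagged_partitions_split[OF p, where c = c]) blast
  have "RS_sum (indicator {..c}) g (n, x, \<xi>) = (\<Sum>i\<in>{..<n} \<inter> {..<m}. g (x (Suc i)) - g (x i))"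
    unfolding RS_sum_eq sum.inter_restrict[OF finite_lessThan]
    using below above by (intro sum.cong) (auto simp: indicator_def not_le)
  also have "{..<n} \<inter> {..<m} = {..<m}" using \<open>m \<le> n\<close> by auto
  also have "(\<Sum>i<m. g (x (Suc i)) - g (x i)) = g (x m) - g a"
    using P by (simp add: sum_lessThan_telescope[of "\<lambda>i. g (x i)"] is_partition_def)
  finally have sum: "RS_sum (indicator {..c}) g (n, x, \<xi>) = g (x m) - g a" .
  have "x m < c + d"
  proof (cases m)
    case 0 then show ?thesis using P \<open>a \<le> c\<close> \<open>d > 0\<close> by (simp add: is_partition_def)
  next
    case (Suc j)
    then show ?thesis using below[of j] T[of j] mesh[rule_format, of j] \<open>m \<le> n\<close> by auto
  qed
  moreover have "c - d < x m"
  proof (cases "m = n")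
    case True then show ?thesis using P \<open>c < b\<close> \<open>d > 0\<close> by (simp add: is_partition_def)
  next
    case False
    then show ?thesis using above[of m] T[of m] mesh[rule_format, of m] \<open>m \<le> n\<close> by auto
  qed
  ultimately show ?thesis using that[OF \<open>m \<le> n\<close> sum] by (simp add: abs_less_iff)
qed

lemma has_RS_integral_indicator_atMost:
  assumes "a \<le> c" and g: "continuous_on {a..b} g"
  shows "has_RS_integral (indicator {..c}) g a b (g (min c b) - g a)"
proof (cases "b \<le> c")
  case True
  have "has_RS_integral (indicator {..c}) g a b (g b - g a)"
    by (rule has_RS_integral_cong[THEN iffD2, OF _ has_RS_integral_one]) (use True in auto)
  then show ?thesis using True by (simp add: min_absorb2)
next
  case False
  show ?thesis
    unfolding has_RS_integral_iff_tendsto tendsto_iff eventually_vanishing_mesh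
  proof (intro allI impI)
    fix e :: real assume "e > 0"
    have "c \<in> {a..b}" using \<open>a \<le> c\<close> False by simp
    then obtain d where "d > 0" and d: "\<And>y. y \<in> {a..b} \<Longrightarrow> dist y c < d \<Longrightarrow> dist (g y) (g c) < e"
      using g \<open>e > 0\<close> unfolding continuous_on_iff by blast
    show "\<exists>d>0. \<forall>n x \<xi>. (n, x, \<xi>) \<in> tagged_partitions a b \<and> (\<forall>i<n. x (Suc i) - x i < d) \<longrightarrow>
        dist (RS_sum (indicator {..c}) g (n, x, \<xi>)) (g (min c b) - g a) < e"
    proof (intro exI[of _ d] conjI allI impI)
      fix n x \<xi> assume p: "(n, x, \<xi>) \<in> tagged_partitions a b \<and> (\<forall>i<n. x (Suc i) - x i < d)"
      have "c < b" using False by simp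
      obtain m where m: "m \<le> n" "RS_sum (indicator {..c}) g (n, x, \<xi>) = g (x m) - g a" "\<bar>x m - c\<bar> < d"
        using RS_sum_indicator_atMost[OF p[THEN conjunct1] p[THEN conjunct2] \<open>d > 0\<close> \<open>a \<le> c\<close> \<open>c < b\<close>] .
      have "x m \<in> {a..b}"
        using is_partition_mem[of a b n x m] p m(1) by (simp add: tagged_partitions_def)
      then show "dist (RS_sum (indicator {..c}) g (n, x, \<xi>)) (g (min c b) - g a) < e"
        using d[of "x m"] m False by (simp add: dist_real_def)
    qed (rule \<open>d > 0\<close>)
  qed
qed

text \<open>The step function equal to f a at a and to f (p (k+1)) on (p k, p (k+1)], for the uniform
  partition p of [a, b] into N pieces.\<close>
definition step_approx :: "(real \<Rightarrow> real) \<Rightarrow> real \<Rightarrow> real \<Rightarrow> nat \<Rightarrow> real \<Rightarrow> real" where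
  "step_approx f a b N u =
     f a * indicator {..a} u +
     (\<Sum>k<N. f (uniform_partition a b N (Suc k)) *
        (indicator {..uniform_partition a b N (Suc k)} u - indicator {..uniform_partition a b N k} u))"

lemma has_RS_integral_step_approx:
  assumes ab: "a \<le> b" and g: "continuous_on {a..b} g"
  shows "\<exists>J. continuous_on {a..b} J \<and> (\<forall>u\<in>{a..b}. has_RS_integral (step_approx f a b N) g a u (J u))"
proof -
  let ?p = "uniform_partition a b N"
  define G where "G c u = g (min c u) - g a" for c u
  have G_int: "has_RS_integral (indicator {..c}) g a u (G c u)" if "a \<le> c" "u \<in> {a..b}" for c u
    unfolding G_def
    by (rule has_RS_integral_indicator_atMost[OF that(1) continuous_on_subset[OF g]]) (use that in auto)
  have G_cont: "continuous_on {a..b} (G c)" if "a \<le> c" for c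
    unfolding G_def
    by (intro continuous_intros continuous_on_compose2[OF g]) (use that ab in auto)
  define J where "J u = f a * G a u + (\<Sum>k<N. f (?p (Suc k)) * (G (?p (Suc k)) u - G (?p k) u))" for u
  show ?thesis
  proof (intro exI[of _ J] conjI ballI)
    show "continuous_on {a..b} J"
      unfolding J_def by (intro continuous_intros G_cont uniform_partition_ge ab order_refl)
    fix u assume "u \<in> {a..b}"
    show "has_RS_integral (step_approx f a b N) g a u (J u)"
      unfolding step_approx_def[abs_def] J_def
      by (intro has_RS_integral_add has_RS_integral_cmult has_RS_integral_sum has_RS_integral_diff
          G_int uniform_partition_ge ab order_refl \<open>u \<in> {a..b}\<close>)
  qed
qed

lemma abs_step_approx_diff_le:
  assumes ab: "a \<le> b" and "N > 0" and u: "u \<in> {a..b}" and "e \<ge> 0"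
    and e: "\<And>k. k < N \<Longrightarrow> uniform_partition a b N k < u \<Longrightarrow> u \<le> uniform_partition a b N (Suc k) \<Longrightarrow>
      \<bar>f u - f (uniform_partition a b N (Suc k))\<bar> \<le> e"
  shows "\<bar>f u - step_approx f a b N u\<bar> \<le> e"
proof -
  let ?p = "uniform_partition a b N"
  define H :: "real \<Rightarrow> real" where "H c = indicator {..c} u" for c
  define D where "D k = H (?p (Suc k)) - H (?p k)" for k
  have P: "is_partition a b N ?p" by (rule is_partition_uniform[OF ab \<open>N > 0\<close>])
  have D_cases: "D k = 0 \<or> (D k = 1 \<and> ?p k < u \<and> u \<le> ?p (Suc k))" for k
    using uniform_partition_le_Suc[OF ab, of N k] unfolding D_def H_def by (auto simp: indicator_def)
  have "(\<Sum>k<N. D k) = H (?p N) - H (?p 0)"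
    unfolding D_def by (rule sum_lessThan_telescope)
  also have "\<dots> = 1 - H a" using P u by (simp add: is_partition_def H_def)
  finally have sum_D: "(\<Sum>k<N. D k) = 1 - H a" .
  have "(\<Sum>k<N. D k * f u) = (1 - H a) * f u" "(\<Sum>k<N. f u * D k) = f u * (1 - H a)"
    by (simp_all add: sum_distrib_left[symmetric] sum_distrib_right[symmetric] sum_D)
  then have "f u - step_approx f a b N u = (f u - f a) * H a + (\<Sum>k<N. (f u - f (?p (Suc k))) * D k)"
    unfolding step_approx_def H_def[symmetric] D_def[symmetric]
    by (simp add: algebra_simps sum_subtractf)
  also have "(f u - f a) * H a = 0" using u by (auto simp: H_def indicator_def)
  finally have "\<bar>f u - step_approx f a b N u\<bar> = \<bar>\<Sum>k<N. (f u - f (?p (Suc k))) * D k\<bar>" by simp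
  also have "\<dots> \<le> (\<Sum>k<N. e * D k)"
  proof (rule order_trans[OF sum_abs sum_mono])
    fix k assume "k \<in> {..<N}"
    then show "\<bar>(f u - f (?p (Suc k))) * D k\<bar> \<le> e * D k"
      using D_cases[of k] e[of k] by auto
  qed
  also have "\<dots> = e * (1 - H a)" by (simp add: sum_distrib_left[symmetric] sum_D)
  also have "\<dots> \<le> e" using \<open>e \<ge> 0\<close> by (simp add: H_def indicator_def)
  finally show ?thesis .
qed

lemma uniform_limit_step_approx:
  assumes ab: "a \<le> b" and f: "continuous_on {a..b} f"
  shows "uniform_limit {a..b} (step_approx f a b) f sequentially"
proof (rule uniform_limitI)
  fix e :: real assume "e > 0"
  have "uniformly_continuous_on {a..b} f" using f compact_uniformly_continuous by blast
  then obtain d where "d > 0" and d: "\<And>x y. x \<in> {a..b} \<Longrightarrow> y \<in> {a..b} \<Longrightarrow> dist y x < d \<Longrightarrow> dist (f y) (f x) < e / 2"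
    using \<open>e > 0\<close> unfolding uniformly_continuous_on_def by (meson half_gt_zero)
  have "\<forall>\<^sub>F N in sequentially. (b - a) / real N < d"
    using lim_const_over_n[of "b - a"] \<open>d > 0\<close> by (auto dest: order_tendstoD(2))
  with eventually_gt_at_top[of 0]
  show "\<forall>\<^sub>F N in sequentially. \<forall>u\<in>{a..b}. dist (step_approx f a b N u) (f u) < e"
  proof eventually_elim
    case (elim N)
    show ?case
    proof
      fix u assume u: "u \<in> {a..b}"
      have "\<bar>f u - step_approx f a b N u\<bar> \<le> e / 2"
      proof (rule abs_step_approx_diff_le[OF ab \<open>N > 0\<close> u])
        fix k assume k: "k < N" "uniform_partition a b N k < u" "u \<le> uniform_partition a b N (Suc k)"
        then have "dist u (uniform_partition a b N (Suc k)) < d"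
          using uniform_partition_step[of a b N k] elim by (simp add: dist_real_def)
        moreover have "uniform_partition a b N (Suc k) \<in> {a..b}"
          using is_partition_mem[OF is_partition_uniform[OF ab \<open>N > 0\<close>], of "Suc k"] k(1) by simp
        ultimately have "dist (f u) (f (uniform_partition a b N (Suc k))) < e / 2"
          using d u by blast
        then show "\<bar>f u - f (uniform_partition a b N (Suc k))\<bar> \<le> e / 2"
          unfolding dist_real_def by (rule less_imp_le)
      qed (use \<open>e > 0\<close> in simp)
      then show "dist (step_approx f a b N u) (f u) < e"
        using \<open>e > 0\<close> by (simp add: dist_real_def abs_minus_commute)
    qed
  qed
qed

lemma has_RS_integral_RS_integral:
  assumes f: "continuous_on {a..b} f" and g: "continuous_on {a..b} g" and W: "controls W g a b"
    and u: "u \<in> {a..b}"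
  shows "has_RS_integral f g a u (RS_integral f g a u)"
proof -
  have ab: "a \<le> b" and au: "a \<le> u" and ub: "u \<le> b" using u by auto
  have "\<forall>N. \<exists>I. has_RS_integral (step_approx f a b N) g a u I"
    using has_RS_integral_step_approx[OF ab g] u by blast
  then obtain I where I: "\<And>N. has_RS_integral (step_approx f a b N) g a u (I N)" by metis
  have "has_RS_integral f g a u (lim I)"
    using has_RS_integral_uniform_limit(2)[OF au controls_subinterval[OF W order_refl ub] I
        uniform_limit_on_subset[OF uniform_limit_step_approx[OF ab f]]] ub by auto
  then show ?thesis using RS_integral_unique[OF au] by simp
qed

lemma uniform_limit_RS_integrals:
  assumes ab: "a \<le> b" and W: "controls W g a b"
    and J: "\<And>n u. u \<in> {a..b} \<Longrightarrow> has_RS_integral (f n) g a u (J n u)"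
    and I: "\<And>u. u \<in> {a..b} \<Longrightarrow> has_RS_integral h g a u (I u)"
    and lim: "uniform_limit {a..b} f h sequentially"
  shows "uniform_limit {a..b} J I sequentially"
proof (rule uniform_limitI)
  fix e :: real assume "e > 0"
  define D where "D = W b - W a"
  have "D \<ge> 0" using controls_mono[OF W order_refl ab order_refl] by (simp add: D_def)
  then have "e / (D + 1) > 0" using \<open>e > 0\<close> by simp
  with lim have "\<forall>\<^sub>F n in sequentially. \<forall>u\<in>{a..b}. \<bar>f n u - h u\<bar> < e / (D + 1)"
    unfolding uniform_limit_iff dist_real_def by blast
  then show "\<forall>\<^sub>F n in sequentially. \<forall>u\<in>{a..b}. dist (J n u) (I u) < e"
  proof eventually_elim
    case (elim n)
    show ?case
    proof
      fix u assume u: "u \<in> {a..b}"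
      have "\<bar>J n u - I u\<bar> \<le> e / (D + 1) * (W u - W a)"
        by (rule has_RS_integral_dist_le[OF _ controls_subinterval[OF W order_refl] J[OF u] I[OF u]])
          (use u elim in \<open>auto intro: less_imp_le\<close>)
      also have "\<dots> \<le> e / (D + 1) * D"
        using controls_mono[OF W _ _ order_refl, of u] u \<open>e / (D + 1) > 0\<close> unfolding D_def
        by (intro mult_left_mono) auto
      also have "\<dots> < e" by (rule divide_add_one_mult_less[OF \<open>D \<ge> 0\<close> \<open>e > 0\<close>])
      finally show "dist (J n u) (I u) < e" by (simp add: dist_real_def)
    qed
  qed
qed

lemma continuous_on_RS_integral:
  assumes f: "continuous_on {a..b} f" and g: "continuous_on {a..b} g" and W: "controls W g a b"
  shows "continuous_on {a..b} (\<lambda>u. RS_integral f g a u)"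
proof (cases "a \<le> b")
  case False
  then show ?thesis by simp
next
  case ab: True
  have "\<forall>N. \<exists>J. continuous_on {a..b} J \<and> (\<forall>u\<in>{a..b}. has_RS_integral (step_approx f a b N) g a u (J u))"
    using has_RS_integral_step_approx[OF ab g] by blast
  then obtain J where J_cont: "\<And>N. continuous_on {a..b} (J N)"
    and J: "\<And>N u. u \<in> {a..b} \<Longrightarrow> has_RS_integral (step_approx f a b N) g a u (J N u)"
    by metis
  have "uniform_limit {a..b} J (\<lambda>u. RS_integral f g a u) sequentially"
    by (rule uniform_limit_RS_integrals[OF ab W J has_RS_integral_RS_integral[OF f g W]
          uniform_limit_step_approx[OF ab f]])
  then show ?thesis by (intro uniform_limit_theorem[where F = sequentially]) (simp_all add: J_cont)
qed


section \<open>Signature coordinates of controlled paths\<close>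

abbreviation basis_words :: "nat \<Rightarrow> 'a::euclidean_space list set" where
  "basis_words k \<equiv> {is. set is \<subseteq> Basis \<and> length is = k}"

locale controlled_path =
  fixes \<gamma> :: "real \<Rightarrow> 'a::euclidean_space" and a b :: real and V :: "real \<Rightarrow> real"
  assumes le: "a \<le> b" and continuous: "continuous_on {a..b} \<gamma>"
    and controls: "controls V \<gamma> a b" and control_start: "V a = 0"
begin

lemma controls_coordinate: "i \<in> Basis \<Longrightarrow> controls V (\<lambda>u. \<gamma> u \<bullet> i) a b"
  using controls by (rule controls_inner_Basis)

lemma continuous_coordinate: "continuous_on {a..b} (\<lambda>u. \<gamma> u \<bullet> i)"
  using continuous by (intro continuous_intros)

lemma control_nonneg: "u \<in> {a..b} \<Longrightarrow> 0 \<le> V u"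
  using controls_mono[OF controls, of a u] control_start by auto

lemma control_le_end: "u \<in> {a..b} \<Longrightarrow> V u \<le> V b"
  using controls_mono[OF controls, of u b] by auto

lemma sig_coord_continuous_bound:
  "set is \<subseteq> Basis \<Longrightarrow> continuous_on {a..b} (\<lambda>u. sig_coord \<gamma> a u is) \<and>
     (\<forall>u\<in>{a..b}. \<bar>sig_coord \<gamma> a u is\<bar> \<le> V u ^ length is / fact (length is))"
proof (induction "is")
  case (Cons i js)
  then have i: "i \<in> Basis" and cont: "continuous_on {a..b} (\<lambda>u. sig_coord \<gamma> a u js)"
    and bound: "\<And>u. u \<in> {a..b} \<Longrightarrow> \<bar>sig_coord \<gamma> a u js\<bar> \<le> V u ^ length js / fact (length js)"
    by auto
  note RS = cont continuous_coordinate controls_coordinate[OF i]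
  have "\<bar>sig_coord \<gamma> a u (i # js)\<bar> \<le> V u ^ Suc (length js) / fact (Suc (length js))"
    if u: "u \<in> {a..b}" for u
  proof -
    have au: "a \<le> u" and ub: "u \<le> b" using u by auto
    have "\<bar>RS_integral (\<lambda>u. sig_coord \<gamma> a u js) (\<lambda>u. \<gamma> u \<bullet> i) a u\<bar>
        \<le> V u ^ Suc (length js) / fact (Suc (length js))"
    proof (rule abs_has_RS_integral_le[OF au has_RS_integral_RS_integral[OF RS u]])
      fix n x assume P: "is_partition a u n x"
      have W: "controls V (\<lambda>u. \<gamma> u \<bullet> i) a u"
        using controls_subinterval[OF controls_coordinate[OF i] order_refl ub] .
      show "\<bar>RS_sum (\<lambda>u. sig_coord \<gamma> a u js) (\<lambda>u. \<gamma> u \<bullet> i) (n, x, x)\<bar>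
          \<le> V u ^ Suc (length js) / fact (Suc (length js))"
        unfolding RS_sum_eq
      proof (rule abs_increment_sum_le_controls_power[OF P W control_start])
        fix j assume "j < n"
        then show "\<bar>sig_coord \<gamma> a (x j) js\<bar> \<le> V (x j) ^ length js / fact (length js)"
          using bound is_partition_mem[OF P, of j] ub by auto
      qed
    qed
    then show ?thesis by simp
  qed
  then show ?case using continuous_on_RS_integral[OF RS] by simp
qed simp

lemma sig_coord_bound:
  assumes "set is \<subseteq> Basis" "u \<in> {a..b}"
  shows "\<bar>sig_coord \<gamma> a u is\<bar> \<le> V b ^ length is / fact (length is)"
proof -
  have "\<bar>sig_coord \<gamma> a u is\<bar> \<le> V u ^ length is / fact (length is)"
    using sig_coord_continuous_bound[OF assms(1)] assms(2) by blast
  also have "\<dots> \<le> V b ^ length is / fact (length is)"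
    using control_nonneg[OF assms(2)] control_le_end[OF assms(2)]
    by (intro divide_right_mono power_mono) auto
  finally show ?thesis .
qed

lemma has_RS_integral_sig_coord:
  assumes "set (i # js) \<subseteq> Basis" "s \<in> {a..b}"
  shows "has_RS_integral (\<lambda>u. sig_coord \<gamma> a u js) (\<lambda>u. \<gamma> u \<bullet> i) a s (sig_coord \<gamma> a s (i # js))"
proof -
  have "set js \<subseteq> Basis" "i \<in> Basis" using assms(1) by auto
  note cont = conjunct1[OF sig_coord_continuous_bound[OF \<open>set js \<subseteq> Basis\<close>]]
  show ?thesis
    using has_RS_integral_RS_integral[OF cont continuous_coordinate
        controls_coordinate[OF \<open>i \<in> Basis\<close>] assms(2)]
    by simp
qed

lemma has_RS_integral_sig_coord_sum:
  assumes "i \<in> Basis" "s \<in> {a..b}"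
  shows "has_RS_integral (\<lambda>u. \<Sum>js\<in>basis_words k. c js * sig_coord \<gamma> a u js) (\<lambda>u. \<gamma> u \<bullet> i) a s
    (\<Sum>js\<in>basis_words k. c js * sig_coord \<gamma> a s (i # js))"
  using assms by (intro has_RS_integral_sum has_RS_integral_cmult has_RS_integral_sig_coord) auto

lemma sig_coord_scaleR:
  "set is \<subseteq> Basis \<Longrightarrow> s \<in> {a..b} \<Longrightarrow>
     sig_coord (\<lambda>u. c *\<^sub>R \<gamma> u) a s is = c ^ length is * sig_coord \<gamma> a s is"
proof (induction "is" arbitrary: s)
  case (Cons i js)
  have IH: "sig_coord (\<lambda>u. c *\<^sub>R \<gamma> u) a u js = c ^ length js * sig_coord \<gamma> a u js"
    if "u \<in> {a..s}" for u
    using Cons.IH[of u] Cons.prems that by auto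
  have "has_RS_integral (\<lambda>u. c ^ length js * sig_coord \<gamma> a u js) (\<lambda>u. c * (\<gamma> u \<bullet> i)) a s
      (c * (c ^ length js * sig_coord \<gamma> a s (i # js)))"
    unfolding has_RS_integral_scale_integrator
    by (intro has_RS_integral_cmult has_RS_integral_sig_coord Cons.prems)
  then have "has_RS_integral (\<lambda>u. sig_coord (\<lambda>u. c *\<^sub>R \<gamma> u) a u js) (\<lambda>u. c * (\<gamma> u \<bullet> i)) a s
      (c * (c ^ length js * sig_coord \<gamma> a s (i # js)))"
    using has_RS_integral_cong[of a s "\<lambda>u. sig_coord (\<lambda>u. c *\<^sub>R \<gamma> u) a u js"
        "\<lambda>u. c ^ length js * sig_coord \<gamma> a u js"] IH by simp
  note int = RS_integral_unique[OF _ this]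
  show ?case using int Cons.prems(2) by simp
qed simp

lemma sig_inner_scaleR_left:
  "s \<in> {a..b} \<Longrightarrow> sig_inner k (\<lambda>u. c *\<^sub>R \<gamma> u) \<sigma> a s t = c ^ k * sig_inner k \<gamma> \<sigma> a s t"
  unfolding sig_inner_def sum_distrib_left by (intro sum.cong) (simp_all add: sig_coord_scaleR)

lemma sig_inner_scaleR_right:
  "t \<in> {a..b} \<Longrightarrow> sig_inner k \<sigma> (\<lambda>v. c *\<^sub>R \<gamma> v) a s t = c ^ k * sig_inner k \<sigma> \<gamma> a s t"
  unfolding sig_inner_def sum_distrib_left by (intro sum.cong) (simp_all add: sig_coord_scaleR mult_ac)

end


section \<open>The signature kernel\<close>

lemma sig_inner_0:
  fixes \<gamma> \<sigma> :: "real \<Rightarrow> 'a::euclidean_space"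
  shows "sig_inner 0 \<gamma> \<sigma> a s t = 1"
proof -
  have "(basis_words 0 :: 'a list set) = {[]}" by auto
  then show ?thesis unfolding sig_inner_def by simp
qed

lemma sig_inner_Suc:
  fixes \<gamma> \<sigma> :: "real \<Rightarrow> 'a::euclidean_space"
  shows "sig_inner (Suc k) \<gamma> \<sigma> a s t =
    (\<Sum>i\<in>Basis. \<Sum>js\<in>basis_words k. sig_coord \<gamma> a s (i # js) * sig_coord \<sigma> a t (i # js))"
proof -
  let ?F = "\<lambda>is. sig_coord \<gamma> a s is * sig_coord \<sigma> a t is"
  have inj: "inj_on (\<lambda>(js, i). i # js) ((basis_words k :: 'a list set) \<times> Basis)"
    by (auto simp: inj_on_def)
  have "sig_inner (Suc k) \<gamma> \<sigma> a s t = sum ?F ((\<lambda>(js, i). i # js) ` (basis_words k \<times> Basis))"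
    unfolding sig_inner_def lists_length_Suc_eq ..
  also have "\<dots> = (\<Sum>(js, i)\<in>basis_words k \<times> Basis. ?F (i # js))"
    by (rule sum.reindex_cong[OF inj refl]) (auto simp del: sig_coord.simps)
  also have "\<dots> = (\<Sum>js\<in>basis_words k. \<Sum>i\<in>Basis. ?F (i # js))"
    by (rule sum.cartesian_product[symmetric])
  also have "\<dots> = (\<Sum>i\<in>Basis. \<Sum>js\<in>basis_words k. ?F (i # js))" by (rule sum.swap)
  finally show ?thesis .
qed

lemma abs_sum_basis_words_mult_le:
  fixes P Q :: "'a::euclidean_space list \<Rightarrow> real"
  assumes P: "\<And>js. js \<in> basis_words k \<Longrightarrow> \<bar>P js\<bar> \<le> p"
    and Q: "\<And>js. js \<in> basis_words k \<Longrightarrow> \<bar>Q js\<bar> \<le> q"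
  shows "\<bar>\<Sum>js\<in>basis_words k. P js * Q js\<bar> \<le> real DIM('a) ^ k * (p * q)"
proof -
  have "\<bar>\<Sum>js\<in>basis_words k. P js * Q js\<bar> \<le> (\<Sum>js\<in>basis_words k. \<bar>P js * Q js\<bar>)"
    by (rule sum_abs)
  also have "\<dots> \<le> (\<Sum>js\<in>(basis_words k :: 'a list set). p * q)"
  proof (rule sum_mono)
    fix js :: "'a list" assume js: "js \<in> basis_words k"
    have "0 \<le> p" using P[OF js] abs_ge_zero[of "P js"] by linarith
    then show "\<bar>P js * Q js\<bar> \<le> p * q"
      unfolding abs_mult using P[OF js] Q[OF js] by (intro mult_mono) auto
  qed
  also have "\<dots> = real DIM('a) ^ k * (p * q)" by (simp add: card_lists_length_eq)
  finally show ?thesis .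
qed

lemma divide_fact_le_self: "0 \<le> x \<Longrightarrow> x / fact k \<le> (x :: real)"
  using divide_left_mono[of 1 "fact k" x] by simp

locale controlled_pair = G: controlled_path \<gamma> a b Vg + S: controlled_path \<sigma> a b Vs
  for \<gamma> \<sigma> :: "real \<Rightarrow> 'a::euclidean_space" and a b :: real and Vg Vs :: "real \<Rightarrow> real"
begin

definition majorant :: "real \<Rightarrow> nat \<Rightarrow> real" where
  "majorant \<theta> k = (\<bar>\<theta>\<bar> * (real DIM('a) * Vg b * Vs b)) ^ k / fact k"

lemma summable_majorant: "summable (majorant \<theta>)"
  using summable_exp[of "\<bar>\<theta>\<bar> * (real DIM('a) * Vg b * Vs b)"]
  unfolding majorant_def[abs_def] by (simp add: divide_inverse mult.commute)

lemma abs_kernel_term_le: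
  assumes "u \<in> {a..b}" "v \<in> {a..b}"
  shows "\<bar>\<theta> ^ k * sig_inner k \<gamma> \<sigma> a u v\<bar> \<le> majorant \<theta> k"
proof -
  have "\<bar>sig_inner k \<gamma> \<sigma> a u v\<bar> \<le> real DIM('a) ^ k * (Vg b ^ k / fact k * Vs b ^ k)"
    unfolding sig_inner_def
  proof (rule abs_sum_basis_words_mult_le)
    fix js :: "'a list" assume js: "js \<in> basis_words k"
    then show "\<bar>sig_coord \<gamma> a u js\<bar> \<le> Vg b ^ k / fact k"
      using G.sig_coord_bound assms(1) by auto
    have "\<bar>sig_coord \<sigma> a v js\<bar> \<le> Vs b ^ k / fact k"
      using S.sig_coord_bound js assms(2) by auto
    also have "\<dots> \<le> Vs b ^ k"
      using S.control_nonneg[of b] S.le by (intro divide_fact_le_self) simp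
    finally show "\<bar>sig_coord \<sigma> a v js\<bar> \<le> Vs b ^ k" .
  qed
  from mult_left_mono[OF this, of "\<bar>\<theta>\<bar> ^ k"] show ?thesis
    by (simp add: majorant_def abs_mult power_abs power_mult_distrib mult_ac)
qed

lemma abs_kernel_pairing_le:
  assumes "u \<in> {a..b}" "t \<in> {a..b}" "i \<in> Basis"
  shows "\<bar>\<theta> ^ k * (\<Sum>js\<in>basis_words k. sig_coord \<gamma> a u js * sig_coord \<sigma> a t (i # js))\<bar>
    \<le> Vs b * majorant \<theta> k"
proof -
  have "\<bar>\<Sum>js\<in>basis_words k. sig_coord \<gamma> a u js * sig_coord \<sigma> a t (i # js)\<bar>
      \<le> real DIM('a) ^ k * (Vg b ^ k / fact k * Vs b ^ Suc k)"
  proof (rule abs_sum_basis_words_mult_le)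
    fix js :: "'a list" assume js: "js \<in> basis_words k"
    then show "\<bar>sig_coord \<gamma> a u js\<bar> \<le> Vg b ^ k / fact k"
      using G.sig_coord_bound assms(1) by auto
    have "\<bar>sig_coord \<sigma> a t (i # js)\<bar> \<le> Vs b ^ Suc k / fact (Suc k)"
      using S.sig_coord_bound[of "i # js" t] js assms(2,3) by auto
    also have "\<dots> \<le> Vs b ^ Suc k"
      using S.control_nonneg[of b] S.le by (intro divide_fact_le_self) simp
    finally show "\<bar>sig_coord \<sigma> a t (i # js)\<bar> \<le> Vs b ^ Suc k" .
  qed
  from mult_left_mono[OF this, of "\<bar>\<theta>\<bar> ^ k"] show ?thesis
    by (simp add: majorant_def abs_mult power_abs power_mult_distrib mult_ac)
qed

lemma RS_integral_sig_kernel_right: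
  assumes u: "u \<in> {a..b}" and t: "t \<in> {a..b}" and i: "i \<in> Basis"
  shows "RS_integral (\<lambda>v. sig_kernel (\<lambda>n. \<theta> ^ n) \<gamma> \<sigma> a u v) (\<lambda>v. \<sigma> v \<bullet> i) a t =
    (\<Sum>k. \<theta> ^ k * (\<Sum>js\<in>basis_words k. sig_coord \<gamma> a u js * sig_coord \<sigma> a t (i # js)))"
proof -
  have at: "a \<le> t" "t \<le> b" using t by auto
  have "has_RS_integral (\<lambda>v. \<theta> ^ k * sig_inner k \<gamma> \<sigma> a u v) (\<lambda>v. \<sigma> v \<bullet> i) a t
      (\<theta> ^ k * (\<Sum>js\<in>basis_words k. sig_coord \<gamma> a u js * sig_coord \<sigma> a t (i # js)))" for k
    using S.has_RS_integral_sig_coord_sum[OF i t, where k = k and c = "\<lambda>js. \<theta> ^ k * sig_coord \<gamma> a u js"]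
    unfolding sig_inner_def sum_distrib_left by (simp add: mult.assoc)
  moreover have "\<bar>\<theta> ^ k * sig_inner k \<gamma> \<sigma> a u v\<bar> \<le> majorant \<theta> k" if "v \<in> {a..t}" for k v
    using abs_kernel_term_le[OF u] that at(2) by auto
  ultimately have "has_RS_integral (\<lambda>v. \<Sum>k. \<theta> ^ k * sig_inner k \<gamma> \<sigma> a u v) (\<lambda>v. \<sigma> v \<bullet> i) a t
      (\<Sum>k. \<theta> ^ k * (\<Sum>js\<in>basis_words k. sig_coord \<gamma> a u js * sig_coord \<sigma> a t (i # js)))"
    by (rule has_RS_integral_suminf(2)[OF at(1) controls_subinterval[OF S.controls_coordinate[OF i]
          order_refl at(2)] _ _ summable_majorant])
  then show ?thesis unfolding sig_kernel_def by (rule RS_integral_unique[OF at(1)])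
qed

lemma RS_integral_sig_kernel_left_right:
  fixes \<theta> :: real
  assumes s: "s \<in> {a..b}" and t: "t \<in> {a..b}" and i: "i \<in> Basis"
  defines "Y \<equiv> \<lambda>k. \<theta> ^ k * (\<Sum>js\<in>basis_words k. sig_coord \<gamma> a s (i # js) * sig_coord \<sigma> a t (i # js))"
  shows "summable Y"
    and "RS_integral (\<lambda>u. RS_integral (\<lambda>v. sig_kernel (\<lambda>n. \<theta> ^ n) \<gamma> \<sigma> a u v) (\<lambda>v. \<sigma> v \<bullet> i) a t)
      (\<lambda>u. \<gamma> u \<bullet> i) a s = (\<Sum>k. Y k)"
proof -
  have as: "a \<le> s" "s \<le> b" using s by auto
  define A where "A k u = \<theta> ^ k * (\<Sum>js\<in>basis_words k. sig_coord \<gamma> a u js * sig_coord \<sigma> a t (i # js))"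
    for k u
  have "has_RS_integral (A k) (\<lambda>u. \<gamma> u \<bullet> i) a s (Y k)" for k
    using G.has_RS_integral_sig_coord_sum[OF i s, where k = k and c = "\<lambda>js. \<theta> ^ k * sig_coord \<sigma> a t (i # js)"]
    unfolding A_def[abs_def] Y_def sum_distrib_left by (simp add: mult_ac)
  moreover have "\<bar>A k u\<bar> \<le> Vs b * majorant \<theta> k" if "u \<in> {a..s}" for k u
    unfolding A_def using abs_kernel_pairing_le[OF _ t i] that as(2) by auto
  ultimately have "summable Y" "has_RS_integral (\<lambda>u. \<Sum>k. A k u) (\<lambda>u. \<gamma> u \<bullet> i) a s (\<Sum>k. Y k)"
    using has_RS_integral_suminf[OF as(1) controls_subinterval[OF G.controls_coordinate[OF i]
        order_refl as(2)] _ _ summable_mult[OF summable_majorant, of "Vs b"]] by blast+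
  moreover have "RS_integral (\<lambda>v. sig_kernel (\<lambda>n. \<theta> ^ n) \<gamma> \<sigma> a u v) (\<lambda>v. \<sigma> v \<bullet> i) a t = (\<Sum>k. A k u)"
    if "u \<in> {a..s}" for u
    unfolding A_def using RS_integral_sig_kernel_right[OF _ t i] that as(2) by auto
  ultimately show "summable Y"
    and "RS_integral (\<lambda>u. RS_integral (\<lambda>v. sig_kernel (\<lambda>n. \<theta> ^ n) \<gamma> \<sigma> a u v) (\<lambda>v. \<sigma> v \<bullet> i) a t)
      (\<lambda>u. \<gamma> u \<bullet> i) a s = (\<Sum>k. Y k)"
    using RS_integral_unique[OF as(1)] has_RS_integral_cong[of a s
        "\<lambda>u. RS_integral (\<lambda>v. sig_kernel (\<lambda>n. \<theta> ^ n) \<gamma> \<sigma> a u v) (\<lambda>v. \<sigma> v \<bullet> i) a t"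
        "\<lambda>u. \<Sum>k. A k u"]
    by simp_all
qed

lemma sig_kernel_integral_equation:
  assumes s: "s \<in> {a..b}" and t: "t \<in> {a..b}"
  shows "sig_kernel (\<lambda>n. \<theta> ^ n) \<gamma> \<sigma> a s t =
    1 + \<theta> * (\<Sum>i\<in>Basis.
      RS_integral (\<lambda>u. RS_integral (\<lambda>v. sig_kernel (\<lambda>n. \<theta> ^ n) \<gamma> \<sigma> a u v) (\<lambda>v. \<sigma> v \<bullet> i) a t)
        (\<lambda>u. \<gamma> u \<bullet> i) a s)"
proof -
  define Y where "Y i k = \<theta> ^ k * (\<Sum>js\<in>basis_words k. sig_coord \<gamma> a s (i # js) * sig_coord \<sigma> a t (i # js))"
    for i k
  have double: "summable (Y i)"
    "RS_integral (\<lambda>u. RS_integral (\<lambda>v. sig_kernel (\<lambda>n. \<theta> ^ n) \<gamma> \<sigma> a u v) (\<lambda>v. \<sigma> v \<bullet> i) a t)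
      (\<lambda>u. \<gamma> u \<bullet> i) a s = (\<Sum>k. Y i k)" if "i \<in> Basis" for i
    using RS_integral_sig_kernel_left_right[OF s t that, where \<theta> = \<theta>] unfolding Y_def by simp_all
  have summable: "summable (\<lambda>k. \<theta> ^ k * sig_inner k \<gamma> \<sigma> a s t)"
    by (rule summable_comparison_test'[OF summable_majorant, of 0]) (use abs_kernel_term_le s t in simp)
  have "sig_kernel (\<lambda>n. \<theta> ^ n) \<gamma> \<sigma> a s t = 1 + (\<Sum>k. \<theta> ^ Suc k * sig_inner (Suc k) \<gamma> \<sigma> a s t)"
    unfolding sig_kernel_def suminf_split_head[OF summable] by (simp add: sig_inner_0)
  also have "\<dots> = 1 + (\<Sum>k. \<theta> * (\<Sum>i\<in>Basis. Y i k))"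
    by (simp add: Y_def sig_inner_Suc sum_distrib_left mult_ac)
  also have "\<dots> = 1 + \<theta> * (\<Sum>i\<in>Basis. \<Sum>k. Y i k)"
    using double(1) by (simp add: suminf_mult summable_sum suminf_sum)
  finally show ?thesis using double(2) by simp
qed

end


theorem mainTheorem12:
  fixes \<gamma> \<sigma> :: "real \<Rightarrow> 'a::euclidean_space" and \<phi> :: "nat \<Rightarrow> real"
    and \<theta> a b s t :: real
  assumes \<phi>_growth: "\<forall>C>0. summable (\<lambda>k. C ^ k * \<bar>\<phi> k\<bar> / (fact k)\<^sup>2)"
    and \<gamma>_cont: "continuous_on {a..b} \<gamma>" and \<gamma>_bv: "bounded_variation_on a b \<gamma>"
    and \<sigma>_cont: "continuous_on {a..b} \<sigma>" and \<sigma>_bv: "bounded_variation_on a b \<sigma>"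
    and s: "s \<in> {a..b}" and t: "t \<in> {a..b}"
  shows "sig_kernel (\<lambda>n. \<theta> ^ n * \<phi> n) \<gamma> \<sigma> a s t = sig_kernel \<phi> (\<lambda>u. \<theta> *\<^sub>R \<gamma> u) \<sigma> a s t
       \<and> sig_kernel \<phi> (\<lambda>u. \<theta> *\<^sub>R \<gamma> u) \<sigma> a s t = sig_kernel \<phi> \<gamma> (\<lambda>v. \<theta> *\<^sub>R \<sigma> v) a s t
       \<and> sig_kernel (\<lambda>n. \<theta> ^ n) \<gamma> \<sigma> a s t =
           1 + \<theta> * (\<Sum>i\<in>Basis.
              RS_integral (\<lambda>u. RS_integral (\<lambda>v. sig_kernel (\<lambda>n. \<theta> ^ n) \<gamma> \<sigma> a u v) (\<lambda>v. \<sigma> v \<bullet> i) a t)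
                          (\<lambda>u. \<gamma> u \<bullet> i) a s)"
proof -
  have ab: "a \<le> b" using s by simp
  obtain Vg where "controls Vg \<gamma> a b" "Vg a = 0"
    using bounded_variation_on_controls[OF \<gamma>_bv] .
  with ab \<gamma>_cont interpret G: controlled_path \<gamma> a b Vg by unfold_locales
  obtain Vs where "controls Vs \<sigma> a b" "Vs a = 0"
    using bounded_variation_on_controls[OF \<sigma>_bv] .
  with ab \<sigma>_cont interpret S: controlled_path \<sigma> a b Vs by unfold_locales
  interpret controlled_pair \<gamma> \<sigma> a b Vg Vs ..
  have "sig_kernel (\<lambda>n. \<theta> ^ n * \<phi> n) \<gamma> \<sigma> a s t = sig_kernel \<phi> (\<lambda>u. \<theta> *\<^sub>R \<gamma> u) \<sigma> a s t"
    unfolding sig_kernel_def G.sig_inner_scaleR_left[OF s] by (simp add: mult_ac)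
  moreover have "sig_kernel \<phi> (\<lambda>u. \<theta> *\<^sub>R \<gamma> u) \<sigma> a s t = sig_kernel \<phi> \<gamma> (\<lambda>v. \<theta> *\<^sub>R \<sigma> v) a s t"
    unfolding sig_kernel_def G.sig_inner_scaleR_left[OF s] S.sig_inner_scaleR_right[OF t] ..
  ultimately show ?thesis using sig_kernel_integral_equation[OF s t] by blast
qed

end
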